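(* Let $\psi_\pm(x)=\frac{5\pm\sqrt{25-4x}}{2}$ and $\Psi(x)=\frac32\lim_{l\to\infty}5^l\psi_-^{\,l}(x)$. Let $E$ be the set consisting of the empty sequence $\emptyset$ together with all finite sequences $e=(e_1,\dots,e_N)$, $N\ge1$, with $e_j\in\{+,-\}$ and $e_1=+$; write $|e|$ for the length and $\psi_e=\psi_{e_1}\circ\cdots\circ\psi_{e_{|e|}}$, $\psi_\emptyset=\mathrm{id}$. Fix an integer $m_0$ and an initial value $\lambda_{m_0}\in\{2,5,6\}$, and define for $e\in E$ $$\lambda_e=5^{|e|+m_0}\,\Psi(\psi_e(\lambda_{m_0}))\ \text{ if }\lambda_{m_0}\in\{2,5\},\qquad \lambda_e=5^{|e|+m_0+1}\,\Psi(\psi_e(3))\ \text{ if }\lambda_{m_0}=6,$$ and the counting function $\rho_{m_0}(x)=\#\{e\in E:\lambda_e\le x\}$ for $x>0$. Then there exists a continuous, $\log 5$-periodic function $g:\mathbb{R}\to\mathbb{R}$ such that $$\lim_{x\to\infty}\left(\frac{\rho_{m_0}(x)}{x^{\log2/\log5}}-g(\log x)\right)=0.$$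
   Context: These $\lambda_e$ are exactly the eigenvalues of the Laplacian on the Sierpinski gasket (or on the infinite Sierpinski gasket) of eigenfunctions obtained by spectral decimation from a fixed generation of birth $m_0$ and a fixed initial eigenfunction with initial eigenvalue $\lambda_{m_0}$; each such eigenvalue corresponds to a unique eigenfunction extending the fixed initial one. *)

theory Defs
  imports Complex_Main
begin

definition psi_plus :: "real \<Rightarrow> real" where
  "psi_plus x = (5 + sqrt (25 - 4 * x)) / 2"

definition psi_minus :: "real \<Rightarrow> real" where
  "psi_minus x = (5 - sqrt (25 - 4 * x)) / 2"

definition Psi :: "real \<Rightarrow> real" where
  "Psi x = 3 / 2 * lim (\<lambda>l::nat. 5 ^ l * (psi_minus ^^ l) x)"

text \<open>Signs: True = +, False = -.\<close>
definition psi_sign :: "bool \<Rightarrow> real \<Rightarrow> real" where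
  "psi_sign s = (if s then psi_plus else psi_minus)"

definition psi_seq :: "bool list \<Rightarrow> real \<Rightarrow> real" where
  "psi_seq e = foldr (\<lambda>s f. psi_sign s \<circ> f) e id"

definition E_set :: "bool list set" where
  "E_set = {e. e = [] \<or> hd e = True}"

definition lambda_e :: "int \<Rightarrow> real \<Rightarrow> bool list \<Rightarrow> real" where
  "lambda_e m0 lam0 e =
     (if lam0 = 6 then 5 powr (real_of_int (int (length e) + m0 + 1)) * Psi (psi_seq e 3)
      else 5 powr (real_of_int (int (length e) + m0)) * Psi (psi_seq e lam0))"

definition rho :: "int \<Rightarrow> real \<Rightarrow> real \<Rightarrow> nat" where
  "rho m0 lam0 x = card {e \<in> E_set. lambda_e m0 lam0 e \<le> x}"

end

theory Submission
  imports Defs "HOL-Analysis.Analysis" "HOL-Real_Asymp.Real_Asymp"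
begin

text \<open>
  For \<open>e = + f\<close> one has \<open>\<lambda>\<^sub>e = K 5^(|f|+1) h(\<psi>\<^sub>f w)\<close>, where \<open>h = \<Psi> \<circ> \<psi>\<^sub>+\<close> is decreasing and
  injective on \<open>[0, 5]\<close>. Hence, apart from the empty sequence, \<open>\<rho>(x) = \<Sum>\<^sub>n 2^n F\<^sub>n(x / (K 5^(n+1)))\<close>,
  where \<open>F\<^sub>n(t)\<close> is the fraction of the sign sequences \<open>f\<close> of length \<open>n\<close> with \<open>h(\<psi>\<^sub>f w) \<le> t\<close>.
  As \<open>\<psi>\<^sub>-\<close> and \<open>\<psi>\<^sub>+\<close> map \<open>[0, 5]\<close> to the two sides of \<open>5/2\<close>, the outermost sign alone decides,
  for half of the sequences, whether they land in a given ray; this gives \<open>|F\<^sub>n\<^sub>+\<^sub>1 - F\<^sub>n| \<le> 2^-n\<close>, so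
  \<open>F\<^sub>n\<close> converges to some \<open>F\<close>, which is continuous since \<open>F\<^sub>n\<close> only has jumps of size \<open>2^-n\<close>.
  Replacing \<open>F\<^sub>n\<close> by \<open>F\<close> costs \<open>O(1)\<close> per scale, \<open>O(log x)\<close> in total, and the two-sided sum
  \<open>\<Sum>k\<in>\<int>. 2^k F(x / (K 5^(k+1)))\<close> equals \<open>x^(log 2 / log 5) g(log x)\<close> with \<open>g\<close> of period \<open>log 5\<close>.
\<close>

lemma geometric_steps_LIMSEQ:
  fixes a :: "nat \<Rightarrow> real"
  assumes steps: "\<And>n. \<bar>a (Suc n) - a n\<bar> \<le> C * r ^ n" and r: "0 \<le> r" "r < 1"
  shows "a \<longlonglongrightarrow> lim a" and "\<bar>a n - lim a\<bar> \<le> C * r ^ n / (1 - r)"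
proof -
  define d where "d k = a (Suc k) - a k" for k
  have bound: "summable (\<lambda>k. C * r ^ k)" using r by simp
  have d: "summable d"
    using steps by (intro summable_comparison_test[OF _ bound]) (auto simp: d_def)
  have "(\<lambda>n. a 0 + (\<Sum>k<n. d k)) \<longlonglongrightarrow> a 0 + suminf d"
    by (intro tendsto_add tendsto_const summable_LIMSEQ d)
  then have lim: "a \<longlonglongrightarrow> a 0 + suminf d"
    by (simp add: d_def sum_lessThan_telescope)
  then show "a \<longlonglongrightarrow> lim a"
    by (simp add: limI)
  have "(\<Sum>k<n. d k) = a n - a 0"
    by (simp add: d_def sum_lessThan_telescope)
  then have "\<bar>a n - lim a\<bar> = \<bar>\<Sum>k. d (k + n)\<bar>"
    using limI[OF lim] suminf_minus_initial_segment[OF d, of n] by simp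
  also have "\<dots> \<le> (\<Sum>k. C * r ^ n * r ^ k)"
  proof (rule norm_suminf_le[of "\<lambda>k. d (k + n)", unfolded real_norm_def])
    show "\<bar>d (k + n)\<bar> \<le> C * r ^ n * r ^ k" for k
      using steps[of "k + n"] by (simp add: d_def power_add mult_ac)
    show "summable (\<lambda>k. C * r ^ n * r ^ k)"
      using r by (intro summable_mult summable_geometric) auto
  qed
  also have "\<dots> = C * r ^ n / (1 - r)"
    using r by (simp add: suminf_mult suminf_geometric)
  finally show "\<bar>a n - lim a\<bar> \<le> C * r ^ n / (1 - r)" .
qed

lemma card_sublevel_jump_le_1:
  fixes v :: "'a \<Rightarrow> real"
  assumes "finite I" "inj_on v I"
  shows "\<exists>d>0. \<forall>t. \<bar>t - t0\<bar> < d \<longrightarrow>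
           \<bar>real (card {i\<in>I. v i \<le> t}) - real (card {i\<in>I. v i \<le> t0})\<bar> \<le> 1"
proof -
  obtain d where "d > 0" and d: "\<forall>x\<in>v ` I. x \<noteq> t0 \<longrightarrow> d \<le> dist t0 x"
    using finite_set_avoid[OF finite_imageI[OF assms(1)]] by blast
  define Z where "Z = {i\<in>I. v i = t0}"
  have "finite Z" using assms(1) by (simp add: Z_def)
  have "inj_on v Z" using assms(2) by (rule inj_on_subset) (auto simp: Z_def)
  then have "card Z = card (v ` Z)" by (simp add: card_image)
  also have "\<dots> \<le> card {t0}" by (intro card_mono) (auto simp: Z_def)
  finally have Z: "card Z \<le> 1" by simp
  have split: "card {i\<in>I. v i \<le> s} = card ({i\<in>I. v i \<le> s} \<inter> Z) + card ({i\<in>I. v i \<le> s} - Z)" for s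
    using assms(1) by (intro card_Int_Diff) auto
  have small: "card ({i\<in>I. v i \<le> s} \<inter> Z) \<le> 1" for s
    using card_mono[OF \<open>finite Z\<close>, of "{i\<in>I. v i \<le> s} \<inter> Z"] Z by auto
  have "\<bar>real (card {i\<in>I. v i \<le> t}) - real (card {i\<in>I. v i \<le> t0})\<bar> \<le> 1" if t: "\<bar>t - t0\<bar> < d" for t
  proof -
    have "v i \<le> t \<longleftrightarrow> v i \<le> t0" if "i \<in> I" "v i \<noteq> t0" for i
      using d that t by (force simp: dist_real_def)
    then have "{i\<in>I. v i \<le> t} - Z = {i\<in>I. v i \<le> t0} - Z"
      by (auto simp: Z_def)
    then have "card ({i\<in>I. v i \<le> t} - Z) = card ({i\<in>I. v i \<le> t0} - Z)"
      by simp
    then have "card {i\<in>I. v i \<le> t} \<le> card {i\<in>I. v i \<le> t0} + 1"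
      and "card {i\<in>I. v i \<le> t0} \<le> card {i\<in>I. v i \<le> t} + 1"
      using split[of t] split[of t0] small[of t] small[of t0] by linarith+
    then show ?thesis
      by (auto simp: abs_le_iff)
  qed
  then show ?thesis using \<open>d > 0\<close> by blast
qed

lemma isCont_if_approx_by_small_oscillation:
  fixes f :: "real \<Rightarrow> real" and F :: "nat \<Rightarrow> real \<Rightarrow> real"
  assumes approx: "\<And>n t. \<bar>F n t - f t\<bar> \<le> a n" and a: "a \<longlonglongrightarrow> 0"
    and osc: "\<And>n. \<exists>d>0. \<forall>t. \<bar>t - t0\<bar> < d \<longrightarrow> \<bar>F n t - F n t0\<bar> \<le> b n" and b: "b \<longlonglongrightarrow> 0"
  shows "isCont f t0"
  unfolding continuous_at_eps_delta
proof (intro allI impI)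
  fix e :: real assume "e > 0"
  have "(\<lambda>n. 2 * a n + b n) \<longlonglongrightarrow> 0"
    using tendsto_add[OF tendsto_mult[OF tendsto_const a] b] by simp
  from LIMSEQ_D[OF this \<open>e > 0\<close>] obtain n where "norm (2 * a n + b n - 0) < e"
    by blast
  then have n: "2 * a n + b n < e" by simp
  obtain d where "d > 0" and d: "\<forall>t. \<bar>t - t0\<bar> < d \<longrightarrow> \<bar>F n t - F n t0\<bar> \<le> b n"
    using osc by blast
  have "\<bar>f t - f t0\<bar> < e" if "\<bar>t - t0\<bar> < d" for t
    using d[rule_format, OF that] approx[of n t] approx[of n t0] n by linarith
  then show "\<exists>d>0. \<forall>t. dist t t0 < d \<longrightarrow> dist (f t) (f t0) < e"
    using \<open>d > 0\<close> by (auto simp: dist_real_def)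
qed

definition ray :: "real set \<Rightarrow> bool" where
  "ray S \<longleftrightarrow> (\<forall>x\<in>S. {x..} \<subseteq> S) \<or> (\<forall>x\<in>S. {..x} \<subseteq> S)"

lemma ray_vimage_mono:
  assumes "mono f" "ray S"
  shows "ray (f -` S)"
proof -
  from assms(2) consider (up) "\<forall>x\<in>S. {x..} \<subseteq> S" | (down) "\<forall>x\<in>S. {..x} \<subseteq> S"
    unfolding ray_def by blast
  then show ?thesis
  proof cases
    case up
    have "f y \<in> S" if "f x \<in> S" "x \<le> y" for x y
      using up that monoD[OF assms(1) that(2)] by auto
    then show ?thesis unfolding ray_def by auto
  next
    case down
    have "f y \<in> S" if "f x \<in> S" "y \<le> x" for x y
      using down that monoD[OF assms(1) that(2)] by auto
    then show ?thesis unfolding ray_def by auto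
  qed
qed

lemma ray_vimage_antimono:
  assumes "antimono f" "ray S"
  shows "ray (f -` S)"
proof -
  from assms(2) consider (up) "\<forall>x\<in>S. {x..} \<subseteq> S" | (down) "\<forall>x\<in>S. {..x} \<subseteq> S"
    unfolding ray_def by blast
  then show ?thesis
  proof cases
    case up
    have "f y \<in> S" if "f x \<in> S" "y \<le> x" for x y
      using up that antimonoD[OF assms(1) that(2)] by auto
    then show ?thesis unfolding ray_def by auto
  next
    case down
    have "f y \<in> S" if "f x \<in> S" "x \<le> y" for x y
      using down that antimonoD[OF assms(1) that(2)] by auto
    then show ?thesis unfolding ray_def by auto
  qed
qed

section \<open>The maps \<open>psi_minus\<close> and \<open>psi_plus\<close>\<close>

lemma psi_minus_mono: "x \<le> y \<Longrightarrow> psi_minus x \<le> psi_minus y"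
  unfolding psi_minus_def by simp

lemma psi_plus_antimono: "x \<le> y \<Longrightarrow> psi_plus y \<le> psi_plus x"
  unfolding psi_plus_def by simp

lemma psi_minus_eq_iff: "psi_minus x = psi_minus y \<longleftrightarrow> x = y"
  unfolding psi_minus_def by simp

lemma psi_plus_eq_iff: "psi_plus x = psi_plus y \<longleftrightarrow> x = y"
  unfolding psi_plus_def by simp

lemma sqrt_25_minus_4_le_5: "0 \<le> x \<Longrightarrow> sqrt (25 - 4 * x) \<le> 5"
  by (rule real_le_lsqrt) auto

lemma psi_minus_bounds: "0 \<le> x \<Longrightarrow> x \<le> 25/4 \<Longrightarrow> 0 \<le> psi_minus x \<and> psi_minus x \<le> 5/2"
  using sqrt_25_minus_4_le_5[of x] unfolding psi_minus_def by simp

lemma psi_plus_bounds: "0 \<le> x \<Longrightarrow> x \<le> 25/4 \<Longrightarrow> 5/2 \<le> psi_plus x \<and> psi_plus x \<le> 5"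
  using sqrt_25_minus_4_le_5[of x] unfolding psi_plus_def by simp

lemma psi_minus_less: "x < 25/4 \<Longrightarrow> psi_minus x < 5/2"
  unfolding psi_minus_def by simp

lemma psi_plus_greater: "x < 25/4 \<Longrightarrow> 5/2 < psi_plus x"
  unfolding psi_plus_def by simp

lemma psi_minus_pos: "0 < x \<Longrightarrow> 0 < psi_minus x"
proof -
  assume "0 < x"
  then have "sqrt (25 - 4 * x) < 5" by (intro real_less_lsqrt) auto
  then show ?thesis unfolding psi_minus_def by simp
qed

lemma le_5_psi_minus: "0 \<le> x \<Longrightarrow> x \<le> 25/4 \<Longrightarrow> x \<le> 5 * psi_minus x"
proof -
  assume "0 \<le> x" "x \<le> 25/4"
  then have "sqrt (25 - 4 * x) \<le> (25 - 2 * x) / 5"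
    by (intro real_le_lsqrt) (auto simp: power2_eq_square field_simps)
  then show ?thesis unfolding psi_minus_def by simp
qed

lemma inverse_5_psi_minus_ge: "0 < x \<Longrightarrow> x \<le> 25/4 \<Longrightarrow> 1/x - 2/25 \<le> 1 / (5 * psi_minus x)"
proof -
  assume x: "0 < x" "x \<le> 25/4"
  define r where "r = sqrt (25 - 4 * x)"
  have "r < 5" unfolding r_def using x by (intro real_less_lsqrt) auto
  have r_ge: "5 - 4 * x / 5 \<le> r"
    unfolding r_def using x by (intro real_le_rsqrt) (auto simp: power2_eq_square field_simps)
  have "(5 - r) * (5 + r) = 4 * x"
    using x by (simp add: r_def algebra_simps power2_eq_square)
  then have "1 / (5 * psi_minus x) = (5 + r) / (10 * x)"
    using \<open>r < 5\<close> x unfolding psi_minus_def r_def[symmetric] by (simp add: field_simps)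
  then show ?thesis
    using x r_ge by (simp add: field_simps)
qed

lemma psi_minus_expanding:
  assumes "0 \<le> a" "a \<le> b" "b \<le> 25/4"
  shows "b - a \<le> 5 * (psi_minus b - psi_minus a)"
proof -
  define p q where "p = sqrt (25 - 4 * a)" and "q = sqrt (25 - 4 * b)"
  have "q \<le> p" "p \<le> 5" "0 \<le> q"
    using assms sqrt_25_minus_4_le_5[of a] unfolding p_def q_def by auto
  have "4 * (b - a) = (p - q) * (p + q)"
    using assms by (simp add: p_def q_def algebra_simps power2_eq_square)
  also have "\<dots> \<le> (p - q) * 10"
    using \<open>q \<le> p\<close> \<open>p \<le> 5\<close> \<open>0 \<le> q\<close> by (intro mult_left_mono) auto
  finally have "4 * (b - a) \<le> (p - q) * 10" .
  then show ?thesis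
    unfolding psi_minus_def p_def[symmetric] q_def[symmetric] by (simp add: field_simps)
qed

section \<open>The function \<open>Psi\<close>\<close>

definition Psi_approx :: "nat \<Rightarrow> real \<Rightarrow> real" where
  "Psi_approx l x = 5 ^ l * (psi_minus ^^ l) x"

lemma funpow_psi_minus_bounds:
  "0 < x \<Longrightarrow> x \<le> 25/4 \<Longrightarrow> 0 < (psi_minus ^^ l) x \<and> (psi_minus ^^ l) x \<le> 25/4"
  by (induction l) (auto simp: psi_minus_pos dest: psi_minus_bounds[OF less_imp_le])

lemma Psi_approx_Suc: "Psi_approx (Suc l) x = 5 ^ l * (5 * psi_minus ((psi_minus ^^ l) x))"
  unfolding Psi_approx_def by simp

lemma Psi_approx_pos: "0 < x \<Longrightarrow> x \<le> 25/4 \<Longrightarrow> 0 < Psi_approx l x"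
  using funpow_psi_minus_bounds[of x l] unfolding Psi_approx_def by simp

lemma incseq_Psi_approx:
  assumes "0 < x" "x \<le> 25/4"
  shows "incseq (\<lambda>l. Psi_approx l x)"
proof (rule incseq_SucI)
  fix l
  have "(psi_minus ^^ l) x \<le> 5 * psi_minus ((psi_minus ^^ l) x)"
    using funpow_psi_minus_bounds[OF assms] by (intro le_5_psi_minus) (auto intro: less_imp_le)
  then show "Psi_approx l x \<le> Psi_approx (Suc l) x"
    unfolding Psi_approx_Suc by (simp add: Psi_approx_def)
qed

lemma inverse_Psi_approx_ge:
  assumes "0 < x" "x \<le> 25/4"
  shows "1/x - 1/10 + (1/10) * (1/5) ^ l \<le> 1 / Psi_approx l x"
proof (induction l)
  case (Suc l)
  define y where "y = (psi_minus ^^ l) x"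
  have y: "0 < y" "y \<le> 25/4" using funpow_psi_minus_bounds[OF assms] unfolding y_def by auto
  have "1/x - 1/10 + (1/10) * (1/5) ^ Suc l = 1/x - 1/10 + (1/10) * (1/5) ^ l - (2/25) * (1/5) ^ l"
    by simp
  also have "\<dots> \<le> 1 / Psi_approx l x - (2/25) * (1/5) ^ l"
    using Suc.IH by simp
  also have "\<dots> = (1/5) ^ l * (1/y - 2/25)"
    using y by (simp add: Psi_approx_def y_def[symmetric] field_simps power_one_over)
  also have "\<dots> \<le> (1/5) ^ l * (1 / (5 * psi_minus y))"
    using inverse_5_psi_minus_ge[OF y] by (intro mult_left_mono) auto
  also have "\<dots> = 1 / Psi_approx (Suc l) x"
    unfolding Psi_approx_Suc y_def by (simp add: power_one_over)
  finally show ?case .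
qed (simp add: Psi_approx_def)

lemma Psi_approx_le:
  assumes "0 < x" "x \<le> 25/4"
  shows "Psi_approx l x \<le> 10 * x / (10 - x)"
proof -
  have "(10 - x) / (10 * x) = 1/x - 1/10"
    using assms by (simp add: field_simps)
  also have "\<dots> \<le> 1 / Psi_approx l x"
    using inverse_Psi_approx_ge[OF assms, of l] zero_le_power[of "1/5::real" l] by linarith
  finally have "(10 - x) / (10 * x) * Psi_approx l x \<le> 1"
    using Psi_approx_pos[OF assms, of l] by (simp add: le_divide_eq)
  then show ?thesis
    using assms by (simp add: field_simps)
qed

lemma Psi_approx_LIMSEQ:
  assumes "0 < x" "x \<le> 25/4"
  shows "(\<lambda>l. Psi_approx l x) \<longlonglongrightarrow> 2/3 * Psi x"
proof -
  obtain L where L: "(\<lambda>l. Psi_approx l x) \<longlonglongrightarrow> L"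
    using incseq_convergent[OF incseq_Psi_approx[OF assms]] Psi_approx_le[OF assms] by blast
  then have "lim (\<lambda>l. 5 ^ l * (psi_minus ^^ l) x) = L"
    unfolding Psi_approx_def by (rule limI)
  then show ?thesis
    using L by (simp add: Psi_def)
qed

lemma Psi_ge:
  assumes "0 < x" "x \<le> 25/4"
  shows "3/2 * x \<le> Psi x"
proof -
  have "Psi_approx 0 x \<le> 2/3 * Psi x"
    using incseq_Psi_approx[OF assms]
    by (intro LIMSEQ_le[OF tendsto_const Psi_approx_LIMSEQ[OF assms]]) (auto simp: incseq_def)
  then show ?thesis by (simp add: Psi_approx_def)
qed

lemma Psi_approx_increment:
  assumes "0 < x" "x \<le> y" "y \<le> 25/4"
  shows "y - x \<le> Psi_approx l y - Psi_approx l x"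
proof (induction l)
  case (Suc l)
  define a b where "a = (psi_minus ^^ l) x" and "b = (psi_minus ^^ l) y"
  have "0 < a" "b \<le> 25/4"
    using funpow_psi_minus_bounds[of x l] funpow_psi_minus_bounds[of y l] assms
    unfolding a_def b_def by auto
  moreover have "a \<le> b"
    unfolding a_def b_def by (induction l) (use assms in \<open>auto intro: psi_minus_mono\<close>)
  ultimately have "5 ^ l * (b - a) \<le> 5 ^ l * (5 * (psi_minus b - psi_minus a))"
    by (intro mult_left_mono psi_minus_expanding) auto
  then show ?case
    using Suc.IH unfolding Psi_approx_Suc by (simp add: Psi_approx_def a_def b_def algebra_simps)
qed (simp add: Psi_approx_def)

lemma Psi_increment:
  assumes "0 < x" "x \<le> y" "y \<le> 25/4"
  shows "3/2 * (y - x) \<le> Psi y - Psi x"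
proof -
  have "y - x \<le> 2/3 * Psi y - 2/3 * Psi x"
    using assms Psi_approx_increment[OF assms]
    by (intro LIMSEQ_le[OF tendsto_const tendsto_diff[OF Psi_approx_LIMSEQ Psi_approx_LIMSEQ]]) auto
  then show ?thesis by simp
qed

section \<open>Frequencies of sign sequences\<close>

lemma psi_seq_Nil [simp]: "psi_seq [] w = w"
  unfolding psi_seq_def by simp

lemma psi_seq_Cons [simp]: "psi_seq (s # f) w = psi_sign s (psi_seq f w)"
  unfolding psi_seq_def by simp

lemma psi_sign_eq_iff: "psi_sign s x = psi_sign s y \<longleftrightarrow> x = y"
  by (simp add: psi_sign_def psi_minus_eq_iff psi_plus_eq_iff)

lemma psi_sign_greater_iff: "x \<le> 5 \<Longrightarrow> 5/2 < psi_sign s x \<longleftrightarrow> s"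
  using psi_minus_less[of x] psi_plus_greater[of x] by (auto simp: psi_sign_def)

lemma psi_seq_bounds:
  assumes "0 \<le> w" "w \<le> 5"
  shows "0 \<le> psi_seq f w \<and> psi_seq f w \<le> 5"
proof (induction f)
  case (Cons s f)
  then show ?case
    using psi_minus_bounds[of "psi_seq f w"] psi_plus_bounds[of "psi_seq f w"]
    by (auto simp: psi_sign_def)
qed (use assms in simp)

text \<open>The outermost sign of \<open>f\<close> is recovered from the side of \<open>5/2\<close> on which \<open>psi_seq f w\<close> lies.\<close>
lemma inj_on_psi_seq:
  assumes "0 \<le> w" "w \<le> 5"
  shows "inj_on (\<lambda>f. psi_seq f w) {f. length f = n}"
proof (induction n)
  case (Suc n)
  show ?case
  proof (rule inj_onI)
    fix f g assume f: "f \<in> {f. length f = Suc n}" and g: "g \<in> {f. length f = Suc n}"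
      and eq: "psi_seq f w = psi_seq g w"
    obtain s f' t g' where fg: "f = s # f'" "g = t # g'" "length f' = n" "length g' = n"
      using f g by (auto simp: length_Suc_conv)
    have "s = t"
      using eq psi_sign_greater_iff[of _ s] psi_sign_greater_iff[of _ t] psi_seq_bounds[OF assms]
      by (metis fg(1,2) psi_seq_Cons)
    with eq fg have "psi_seq f' w = psi_seq g' w"
      by (simp add: psi_sign_eq_iff)
    with Suc.IH fg show "f = g"
      using \<open>s = t\<close> by (auto dest: inj_onD)
  qed
qed simp

definition sign_count :: "real \<Rightarrow> nat \<Rightarrow> real set \<Rightarrow> nat" where
  "sign_count w n S = card {f. length f = n \<and> psi_seq f w \<in> S}"

definition sign_freq :: "real \<Rightarrow> nat \<Rightarrow> real set \<Rightarrow> real" where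
  "sign_freq w n S = sign_count w n S / 2 ^ n"

lemma finite_lists_length_eq_and: "finite {f :: bool list. length f = n \<and> P f}"
  using finite_lists_length_eq[of "UNIV :: bool set" n] by (auto intro: finite_subset)

lemma sign_count_Suc:
  "sign_count w (Suc n) S = sign_count w n (psi_minus -` S) + sign_count w n (psi_plus -` S)"
proof -
  have split: "{f. length f = Suc n \<and> psi_seq f w \<in> S} =
      Cons False ` {f. length f = n \<and> psi_seq f w \<in> psi_minus -` S} \<union>
      Cons True ` {f. length f = n \<and> psi_seq f w \<in> psi_plus -` S}"
    by (auto simp: length_Suc_conv psi_sign_def split: if_splits)
  show ?thesis
    unfolding sign_count_def split
    by (subst card_Un_disjoint) (auto intro!: finite_lists_length_eq_and simp: card_image)
qed

lemma sign_count_full: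
  assumes "0 \<le> w" "w \<le> 5" "{0..5} \<subseteq> S"
  shows "sign_count w n S = 2 ^ n"
proof -
  have "{f. length f = n \<and> psi_seq f w \<in> S} = {f. length f = n}"
    using assms psi_seq_bounds[OF assms(1,2)] by auto
  then show ?thesis
    using card_lists_length_eq[of "UNIV :: bool set" n] by (simp add: sign_count_def)
qed

lemma sign_count_disjoint:
  assumes "0 \<le> w" "w \<le> 5" "S \<inter> {0..5} = {}"
  shows "sign_count w n S = 0"
proof -
  have "{f. length f = n \<and> psi_seq f w \<in> S} = {}"
    using assms psi_seq_bounds[OF assms(1,2)] by auto
  then show ?thesis
    unfolding sign_count_def by (metis card.empty)
qed

lemma sign_freq_bounds: "0 \<le> sign_freq w n S \<and> sign_freq w n S \<le> 1"
proof -
  have "sign_count w n S \<le> card {f :: bool list. length f = n}"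
    unfolding sign_count_def using finite_lists_length_eq_and[of n "\<lambda>_. True"]
    by (intro card_mono) auto
  then have "real (sign_count w n S) \<le> 2 ^ n"
    using card_lists_length_eq[of "UNIV :: bool set" n] by simp
  then show ?thesis by (simp add: sign_freq_def)
qed

lemma ray_vimage_psi_minus: "ray S \<Longrightarrow> ray (psi_minus -` S)"
  by (rule ray_vimage_mono) (auto intro: monoI psi_minus_mono)

lemma ray_vimage_psi_plus: "ray S \<Longrightarrow> ray (psi_plus -` S)"
  by (rule ray_vimage_antimono) (auto intro: antimonoI psi_plus_antimono)

text \<open>\<open>psi_minus\<close> and \<open>psi_plus\<close> map \<open>[0, 5]\<close> to the two sides of \<open>5/2\<close>, so a ray
  contains or misses one of the two images entirely.\<close>
lemma ray_vimage_full_or_disjoint: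
  assumes "ray S"
  obtains (minus) "{0..5} \<subseteq> psi_minus -` S \<or> psi_minus -` S \<inter> {0..5} = {}"
        | (plus) "{0..5} \<subseteq> psi_plus -` S \<or> psi_plus -` S \<inter> {0..5} = {}"
proof -
  have sides: "psi_minus u \<in> {..5/2}" "psi_plus u \<in> {5/2..}" if "u \<in> {0..5}" for u
    using that psi_minus_bounds[of u] psi_plus_bounds[of u] by auto
  from assms consider (up) "\<forall>x\<in>S. {x..} \<subseteq> S" | (down) "\<forall>x\<in>S. {..x} \<subseteq> S"
    unfolding ray_def by blast
  then show ?thesis
  proof cases
    case up
    show ?thesis
    proof (cases "5/2 \<in> S")
      case True
      then have "{0..5} \<subseteq> psi_plus -` S" using up sides by blast
      then show ?thesis using that(2) by blast
    next
      case False
      then have "psi_minus -` S \<inter> {0..5} = {}" using up sides by blast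
      then show ?thesis using that(1) by blast
    qed
  next
    case down
    show ?thesis
    proof (cases "5/2 \<in> S")
      case True
      then have "{0..5} \<subseteq> psi_minus -` S" using down sides by blast
      then show ?thesis using that(1) by blast
    next
      case False
      then have "psi_plus -` S \<inter> {0..5} = {}" using down sides by blast
      then show ?thesis using that(2) by blast
    qed
  qed
qed

lemma sign_freq_Suc_ray:
  assumes "0 \<le> w" "w \<le> 5" "ray S"
  obtains T c where "ray T" "c \<in> {0, 1}" "\<And>n. sign_freq w (Suc n) S = (c + sign_freq w n T) / 2"
proof -
  have trivial: "\<exists>c\<in>{0, 1}. \<forall>n. sign_count w n A = c * 2 ^ n"
    if "{0..5} \<subseteq> A \<or> A \<inter> {0..5} = {}" for A
    using that sign_count_full[OF assms(1,2)] sign_count_disjoint[OF assms(1,2)] by force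
  have freq: "sign_freq w (Suc n) S = (c + sign_freq w n T) / 2"
    if "sign_count w (Suc n) S = c * 2 ^ n + sign_count w n T" for n c T
    using that by (simp add: sign_freq_def field_simps)
  from assms(3) show ?thesis
  proof (cases rule: ray_vimage_full_or_disjoint)
    case minus
    obtain c where c: "c \<in> {0, 1}" "\<And>n. sign_count w n (psi_minus -` S) = c * 2 ^ n"
      using trivial[OF minus] by blast
    have "sign_freq w (Suc n) S = (real c + sign_freq w n (psi_plus -` S)) / 2" for n
      by (rule freq) (simp add: sign_count_Suc c(2))
    moreover have "real c \<in> {0, 1}" using c(1) by auto
    ultimately show ?thesis by (intro that[OF ray_vimage_psi_plus[OF assms(3)]])
  next
    case plus
    obtain c where c: "c \<in> {0, 1}" "\<And>n. sign_count w n (psi_plus -` S) = c * 2 ^ n"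
      using trivial[OF plus] by blast
    have "sign_freq w (Suc n) S = (real c + sign_freq w n (psi_minus -` S)) / 2" for n
      by (rule freq) (simp add: sign_count_Suc c(2))
    moreover have "real c \<in> {0, 1}" using c(1) by auto
    ultimately show ?thesis by (intro that[OF ray_vimage_psi_minus[OF assms(3)]])
  qed
qed

lemma sign_freq_step:
  assumes "0 \<le> w" "w \<le> 5" "ray S"
  shows "\<bar>sign_freq w (Suc n) S - sign_freq w n S\<bar> \<le> (1/2) ^ n"
  using assms(3)
proof (induction n arbitrary: S)
  case 0
  then show ?case
    using sign_freq_bounds[of w 0 S] sign_freq_bounds[of w 1 S] by (simp add: abs_le_iff)
next
  case (Suc n)
  obtain T c where T: "ray T" "\<And>n. sign_freq w (Suc n) S = (c + sign_freq w n T) / 2"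
    using sign_freq_Suc_ray[OF assms(1,2) Suc.prems] by blast
  have "\<bar>sign_freq w (Suc (Suc n)) S - sign_freq w (Suc n) S\<bar>
      = \<bar>sign_freq w (Suc n) T - sign_freq w n T\<bar> / 2"
    unfolding T(2) by (simp add: diff_divide_distrib[symmetric])
  also have "\<dots> \<le> (1/2) ^ Suc n"
    using Suc.IH[OF T(1)] by simp
  finally show ?case .
qed

definition sign_freq_lim :: "real \<Rightarrow> real set \<Rightarrow> real" where
  "sign_freq_lim w S = lim (\<lambda>n. sign_freq w n S)"

lemma sign_freq_lim_approx:
  assumes "0 \<le> w" "w \<le> 5" "ray S"
  shows "\<bar>sign_freq w n S - sign_freq_lim w S\<bar> \<le> 2 * (1/2) ^ n"
  using geometric_steps_LIMSEQ(2)[of "\<lambda>n. sign_freq w n S" 1 "1/2" n] sign_freq_step[OF assms]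
  by (simp add: sign_freq_lim_def)

lemma sign_freq_LIMSEQ:
  assumes "0 \<le> w" "w \<le> 5" "ray S"
  shows "(\<lambda>n. sign_freq w n S) \<longlonglongrightarrow> sign_freq_lim w S"
  using geometric_steps_LIMSEQ(1)[of "\<lambda>n. sign_freq w n S" 1 "1/2"] sign_freq_step[OF assms]
  by (simp add: sign_freq_lim_def)

lemma sign_freq_lim_bounds:
  assumes "0 \<le> w" "w \<le> 5" "ray S"
  shows "0 \<le> sign_freq_lim w S \<and> sign_freq_lim w S \<le> 1"
  using sign_freq_LIMSEQ[OF assms] sign_freq_bounds[of w _ S]
  by (auto intro: LIMSEQ_le_const LIMSEQ_le_const2)

section \<open>The distribution of the levels\<close>

text \<open>Clipping extends the level function monotonically beyond \<open>[0, 5]\<close>, so that its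
  sublevel sets are rays.\<close>
definition clip :: "real \<Rightarrow> real" where
  "clip u = max 0 (min 5 u)"

definition level :: "real \<Rightarrow> real" where
  "level u = Psi (psi_plus (clip u))"

lemma psi_plus_clip_bounds: "5/2 \<le> psi_plus (clip u) \<and> psi_plus (clip u) \<le> 5"
  by (rule psi_plus_bounds) (auto simp: clip_def)

lemma level_ge: "15/4 \<le> level u"
  using Psi_ge[of "psi_plus (clip u)"] psi_plus_clip_bounds[of u] by (simp add: level_def)

lemma level_increment:
  assumes "u \<le> v"
  shows "3/2 * (psi_plus (clip u) - psi_plus (clip v)) \<le> level u - level v"
  unfolding level_def using psi_plus_clip_bounds[of u] psi_plus_clip_bounds[of v] assms
  by (intro Psi_increment psi_plus_antimono) (auto simp: clip_def)

lemma antimono_level: "antimono level"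
proof (rule antimonoI)
  fix u v :: real assume "u \<le> v"
  then have "psi_plus (clip v) \<le> psi_plus (clip u)"
    by (intro psi_plus_antimono) (auto simp: clip_def)
  then have "0 \<le> 3/2 * (psi_plus (clip u) - psi_plus (clip v))"
    by simp
  then show "level v \<le> level u"
    using level_increment[OF \<open>u \<le> v\<close>] by linarith
qed

lemma inj_on_level: "inj_on level {0..5}"
proof (rule inj_onI)
  have same: "psi_plus (clip x) = psi_plus (clip y)" if "x \<le> y" "level x = level y" for x y
  proof -
    have "psi_plus (clip y) \<le> psi_plus (clip x)"
      using that(1) by (intro psi_plus_antimono) (auto simp: clip_def)
    moreover have "3/2 * (psi_plus (clip x) - psi_plus (clip y)) \<le> 0"
      using level_increment[OF that(1)] that(2) by simp
    ultimately show ?thesis by simp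
  qed
  fix u v assume uv: "u \<in> {0..5}" "v \<in> {0..5}" "level u = level v"
  have "psi_plus (clip u) = psi_plus (clip v)"
    using same[of u v] same[of v u] uv(3) by (metis le_cases)
  then show "u = v"
    using uv(1,2) by (simp add: psi_plus_eq_iff clip_def)
qed

lemma ray_vimage_level_atMost: "ray (level -` {..t})"
  by (rule ray_vimage_antimono[OF antimono_level]) (auto simp: ray_def)

definition level_cdf :: "real \<Rightarrow> nat \<Rightarrow> real \<Rightarrow> real" where
  "level_cdf w n t = sign_freq w n (level -` {..t})"

definition level_cdf_lim :: "real \<Rightarrow> real \<Rightarrow> real" where
  "level_cdf_lim w t = sign_freq_lim w (level -` {..t})"

lemma level_cdf_lim_approx:
  "0 \<le> w \<Longrightarrow> w \<le> 5 \<Longrightarrow> \<bar>level_cdf w n t - level_cdf_lim w t\<bar> \<le> 2 * (1/2) ^ n"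
  unfolding level_cdf_def level_cdf_lim_def by (rule sign_freq_lim_approx[OF _ _ ray_vimage_level_atMost])

lemma level_cdf_lim_bounds:
  "0 \<le> w \<Longrightarrow> w \<le> 5 \<Longrightarrow> 0 \<le> level_cdf_lim w t \<and> level_cdf_lim w t \<le> 1"
  unfolding level_cdf_lim_def by (rule sign_freq_lim_bounds[OF _ _ ray_vimage_level_atMost])

lemma level_cdf_eq_0:
  assumes "0 \<le> w" "w \<le> 5" "t < 15/4"
  shows "level_cdf w n t = 0"
proof -
  have "t < level u" for u
    using level_ge[of u] assms(3) by linarith
  then have "level -` {..t} \<inter> {0..5} = {}"
    by (auto simp: not_le[symmetric])
  then show ?thesis
    using sign_count_disjoint[OF assms(1,2)] by (simp add: level_cdf_def sign_freq_def)
qed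

lemma level_cdf_lim_eq_0: "0 \<le> w \<Longrightarrow> w \<le> 5 \<Longrightarrow> t < 15/4 \<Longrightarrow> level_cdf_lim w t = 0"
  using level_cdf_eq_0 by (simp add: level_cdf_lim_def sign_freq_lim_def level_cdf_def[symmetric])

lemma level_cdf_oscillation:
  assumes "0 \<le> w" "w \<le> 5"
  shows "\<exists>d>0. \<forall>t. \<bar>t - t0\<bar> < d \<longrightarrow> \<bar>level_cdf w n t - level_cdf w n t0\<bar> \<le> (1/2) ^ n"
proof -
  have "inj_on (level \<circ> (\<lambda>f. psi_seq f w)) {f. length f = n}"
    using inj_on_psi_seq[OF assms] psi_seq_bounds[OF assms]
    by (intro comp_inj_on inj_on_subset[OF inj_on_level]) auto
  then obtain d where "d > 0" and d: "\<forall>t. \<bar>t - t0\<bar> < d \<longrightarrow>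
      \<bar>real (sign_count w n (level -` {..t})) - real (sign_count w n (level -` {..t0}))\<bar> \<le> 1"
    using card_sublevel_jump_le_1[OF finite_lists_length_eq_and[of n "\<lambda>_. True"], of "level \<circ> (\<lambda>f. psi_seq f w)" t0]
    by (auto simp: sign_count_def conj_commute)
  have "\<bar>level_cdf w n t - level_cdf w n t0\<bar> \<le> (1/2) ^ n" if "\<bar>t - t0\<bar> < d" for t
  proof -
    have "\<bar>level_cdf w n t - level_cdf w n t0\<bar>
        = \<bar>real (sign_count w n (level -` {..t})) - real (sign_count w n (level -` {..t0}))\<bar> / 2 ^ n"
      by (simp add: level_cdf_def sign_freq_def diff_divide_distrib[symmetric])
    also have "\<dots> \<le> (1/2) ^ n"
      using d that by (simp add: divide_right_mono power_one_over)
    finally show ?thesis .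
  qed
  then show ?thesis using \<open>d > 0\<close> by blast
qed

lemma continuous_level_cdf_lim:
  assumes "0 \<le> w" "w \<le> 5"
  shows "continuous_on UNIV (level_cdf_lim w)"
proof -
  have "isCont (level_cdf_lim w) t0" for t0
    using level_cdf_lim_approx[OF assms] level_cdf_oscillation[OF assms]
    by (intro isCont_if_approx_by_small_oscillation[where F = "level_cdf w" and a = "\<lambda>n. 2 * (1/2) ^ n"
          and b = "\<lambda>n. (1/2) ^ n"]) (auto intro!: tendsto_eq_intros LIMSEQ_power_zero)
  then show ?thesis by (simp add: continuous_at_imp_continuous_on)
qed

section \<open>Counting the eigenvalues\<close>

definition init_value :: "real \<Rightarrow> real" where
  "init_value lam0 = (if lam0 = 6 then 3 else lam0)"

definition lambda_scale :: "int \<Rightarrow> real \<Rightarrow> real" where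
  "lambda_scale m0 lam0 = 5 powr (real_of_int m0 + (if lam0 = 6 then 1 else 0))"

lemma init_value_bounds: "lam0 \<in> {2, 5, 6} \<Longrightarrow> 0 \<le> init_value lam0 \<and> init_value lam0 \<le> 5"
  by (auto simp: init_value_def)

lemma lambda_scale_pos: "0 < lambda_scale m0 lam0"
  by (simp add: lambda_scale_def)

lemma lambda_e_Cons_True:
  assumes "lam0 \<in> {2, 5, 6}"
  shows "lambda_e m0 lam0 (True # f) =
           lambda_scale m0 lam0 * 5 ^ Suc (length f) * level (psi_seq f (init_value lam0))"
proof -
  have "0 \<le> psi_seq f (init_value lam0) \<and> psi_seq f (init_value lam0) \<le> 5"
    using psi_seq_bounds init_value_bounds[OF assms] by blast
  then have level: "level (psi_seq f (init_value lam0)) = Psi (psi_seq (True # f) (init_value lam0))"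
    by (simp add: level_def clip_def psi_sign_def)
  have pow: "5 powr real_of_int (int (length (True # f)) + m0 + c) = 5 ^ Suc (length f) * 5 powr (real_of_int m0 + c)"
    for c :: int
    by (simp add: powr_add powr_realpow[symmetric] add_ac)
  show ?thesis
    using pow[of 0] pow[of 1] level
    by (simp add: lambda_e_def lambda_scale_def init_value_def)
qed

definition scale_count :: "real \<Rightarrow> real \<Rightarrow> nat" where
  "scale_count K x = nat \<lceil>log 5 (x / K)\<rceil>"

lemma below_scale_count:
  assumes "0 < x" "0 < K" "scale_count K x \<le> n"
  shows "x / (K * 5 ^ Suc n) < 15/4"
proof -
  have "log 5 (x / K) \<le> real n"
    using assms(3) real_nat_ceiling_ge[of "log 5 (x / K)"] unfolding scale_count_def by linarith
  then have "x / K \<le> 5 ^ n"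
    using assms(1,2) by (simp add: log_le_iff powr_realpow)
  then have "x / (K * 5 ^ n) \<le> 1"
    using assms(2) by (subst pos_divide_le_eq) (auto simp: pos_divide_le_eq mult.commute)
  moreover have "5 * (x / (K * 5 ^ Suc n)) = x / (K * 5 ^ n)"
    by simp
  ultimately show ?thesis
    by linarith
qed

lemma scale_count_le:
  assumes "0 < K" "K \<le> x"
  shows "real (scale_count K x) \<le> (ln x - ln K) / ln 5 + 1"
proof -
  have "0 \<le> log 5 (x / K)"
    using assms by simp
  then have "real (scale_count K x) \<le> log 5 (x / K) + 1"
    unfolding scale_count_def by linarith
  also have "log 5 (x / K) = (ln x - ln K) / ln 5"
    using assms by (simp add: log_def ln_div)
  finally show ?thesis .
qed

lemma length_less_scale_count:
  fixes m0 :: int and lam0 x :: real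
  assumes "lam0 \<in> {2, 5, 6}" "0 < x" "lambda_e m0 lam0 (True # f) \<le> x"
  shows "length f < scale_count (lambda_scale m0 lam0) x"
proof (rule ccontr)
  let ?K = "lambda_scale m0 lam0" and ?u = "psi_seq f (init_value lam0)"
  assume "\<not> length f < scale_count ?K x"
  then have "x / (?K * 5 ^ Suc (length f)) < 15/4"
    by (intro below_scale_count[OF assms(2) lambda_scale_pos]) simp
  then have "x / (?K * 5 ^ Suc (length f)) < level ?u"
    using level_ge[of ?u] by linarith
  then have "x < ?K * 5 ^ Suc (length f) * level ?u"
    using lambda_scale_pos[of m0 lam0] by (simp add: divide_less_eq mult_ac)
  then show False
    using assms(3) by (simp add: lambda_e_Cons_True[OF assms(1)])
qed

lemma rho_eq_sum:
  fixes m0 :: int and lam0 x :: real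
  assumes "lam0 \<in> {2, 5, 6}" "0 < x"
  defines "w \<equiv> init_value lam0" and "K \<equiv> lambda_scale m0 lam0"
  shows "real (rho m0 lam0 x) = of_bool (lambda_e m0 lam0 [] \<le> x) +
           (\<Sum>n<scale_count K x. 2 ^ n * level_cdf w n (x / (K * 5 ^ Suc n)))"
proof -
  define N where "N = scale_count K x"
  define L where "L n = {f. length f = n \<and> psi_seq f w \<in> level -` {..x / (K * 5 ^ Suc n)}}" for n
  have "0 < K" by (simp add: K_def lambda_scale_pos)
  have L_iff: "f \<in> L n \<longleftrightarrow> length f = n \<and> lambda_e m0 lam0 (True # f) \<le> x" for f n
    using \<open>0 < K\<close> by (auto simp: L_def lambda_e_Cons_True[OF assms(1)] w_def K_def pos_le_divide_eq mult_ac)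
  have bounded: "length f < N" if "f \<in> L n" for f n
    using that length_less_scale_count[OF assms(1,2), of m0 f] unfolding L_iff N_def K_def by blast
  have sets: "{e \<in> E_set. lambda_e m0 lam0 e \<le> x} =
      {e. e = [] \<and> lambda_e m0 lam0 [] \<le> x} \<union> (\<Union>n<N. Cons True ` L n)"
  proof (intro set_eqI)
    fix e
    show "e \<in> {e \<in> E_set. lambda_e m0 lam0 e \<le> x} \<longleftrightarrow>
        e \<in> {e. e = [] \<and> lambda_e m0 lam0 [] \<le> x} \<union> (\<Union>n<N. Cons True ` L n)"
    proof (cases e)
      case (Cons s f)
      then show ?thesis
        using bounded[of f "length f"] by (auto simp: E_set_def L_iff intro!: bexI[of _ "length f"])
    qed (auto simp: E_set_def)
  qed
  have "card (\<Union>n<N. Cons True ` L n) = (\<Sum>n<N. card (L n))"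
    by (subst card_UN_disjoint) (auto simp: L_def card_image finite_lists_length_eq_and)
  moreover have "card {e. e = [] \<and> lambda_e m0 lam0 [] \<le> x} = of_bool (lambda_e m0 lam0 [] \<le> x)"
    by simp
  moreover have "real (card (L n)) = 2 ^ n * level_cdf w n (x / (K * 5 ^ Suc n))" for n
    by (simp add: L_def level_cdf_def sign_freq_def sign_count_def)
  ultimately show ?thesis
    unfolding rho_def sets N_def[symmetric]
    by (subst card_Un_disjoint) (auto simp: L_def finite_lists_length_eq_and)
qed

section \<open>The periodic profile\<close>

definition scale_sum_fine :: "real \<Rightarrow> real \<Rightarrow> real \<Rightarrow> real" where
  "scale_sum_fine w K s = (\<Sum>n. 2 ^ n * level_cdf_lim w (exp s / (K * 5 ^ Suc n)))"

definition scale_sum_coarse :: "real \<Rightarrow> real \<Rightarrow> real \<Rightarrow> real" where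
  "scale_sum_coarse w K s = (\<Sum>n. (1/2) ^ Suc n * level_cdf_lim w (exp s * 5 ^ n / K))"

text \<open>The two series together form \<open>\<Sum>k\<in>\<int>. 2^k F (e^s / (K 5^(k+1)))\<close>, which exactly doubles
  under \<open>s \<mapsto> s + ln 5\<close>; hence the factor \<open>exp (- s ln 2 / ln 5)\<close> makes the profile periodic.\<close>
definition rho_profile :: "real \<Rightarrow> real \<Rightarrow> real \<Rightarrow> real" where
  "rho_profile w K s = exp (- (ln 2 / ln 5) * s) * (scale_sum_fine w K s + scale_sum_coarse w K s)"

context
  fixes w K :: real
  assumes w: "0 \<le> w" "w \<le> 5" and K: "0 < K"
begin

lemma continuous_on_level_cdf_lim_comp:
  "continuous_on S f \<Longrightarrow> continuous_on S (\<lambda>s. level_cdf_lim w (f s))"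
  by (rule continuous_on_compose2[OF continuous_level_cdf_lim[OF w]]) auto

lemma fine_term_eq_0:
  assumes "s \<le> s1" "scale_count K (exp s1) \<le> n"
  shows "level_cdf_lim w (exp s / (K * 5 ^ Suc n)) = 0"
proof -
  have "exp s / (K * 5 ^ Suc n) \<le> exp s1 / (K * 5 ^ Suc n)"
    using assms(1) K by (simp add: divide_right_mono)
  also have "\<dots> < 15/4"
    by (rule below_scale_count[OF exp_gt_zero K assms(2)])
  finally show ?thesis
    by (rule level_cdf_lim_eq_0[OF w])
qed

lemma summable_fine_terms: "summable (\<lambda>n. 2 ^ n * level_cdf_lim w (exp s / (K * 5 ^ Suc n)))"
  by (rule summable_finite[of "{..<scale_count K (exp s)}"]) (use fine_term_eq_0[OF order_refl] in auto)

lemma scale_sum_fine_eq_sum: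
  "s \<le> s1 \<Longrightarrow> scale_sum_fine w K s =
     (\<Sum>n<scale_count K (exp s1). 2 ^ n * level_cdf_lim w (exp s / (K * 5 ^ Suc n)))"
  unfolding scale_sum_fine_def by (rule suminf_finite) (use fine_term_eq_0 in auto)

lemma scale_sum_fine_shift:
  "scale_sum_fine w K (s + ln 5) = level_cdf_lim w (exp s / K) + 2 * scale_sum_fine w K s"
proof -
  have e: "exp (s + ln 5) = exp s * 5" by (simp add: exp_add)
  have "scale_sum_fine w K (s + ln 5) - level_cdf_lim w (exp s / K)
      = (\<Sum>n. 2 ^ Suc n * level_cdf_lim w (exp (s + ln 5) / (K * 5 ^ Suc (Suc n))))"
    using suminf_split_head[OF summable_fine_terms[of "s + ln 5"]] by (simp add: scale_sum_fine_def e)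
  also have "\<dots> = (\<Sum>n. 2 * (2 ^ n * level_cdf_lim w (exp s / (K * 5 ^ Suc n))))"
    by (simp add: e mult_ac)
  also have "\<dots> = 2 * scale_sum_fine w K s"
    unfolding scale_sum_fine_def by (rule suminf_mult[OF summable_fine_terms])
  finally show ?thesis by simp
qed

lemma coarse_term_bounds:
  "0 \<le> (1/2) ^ Suc n * level_cdf_lim w t \<and> (1/2) ^ Suc n * level_cdf_lim w t \<le> (1/2) ^ Suc n"
  using level_cdf_lim_bounds[OF w, of t] by (simp add: mult_left_le)

lemma summable_coarse_terms: "summable (\<lambda>n. (1/2) ^ Suc n * level_cdf_lim w (exp s * 5 ^ n / K))"
  by (rule summable_comparison_test[of _ "\<lambda>n. (1/2) ^ Suc n"]) (use coarse_term_bounds in auto)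

lemma scale_sum_coarse_bounds: "0 \<le> scale_sum_coarse w K s \<and> scale_sum_coarse w K s \<le> 1"
proof
  show "0 \<le> scale_sum_coarse w K s"
    unfolding scale_sum_coarse_def
    by (rule suminf_nonneg[OF summable_coarse_terms]) (use coarse_term_bounds in auto)
  have "scale_sum_coarse w K s \<le> (\<Sum>n. (1/2) ^ Suc n)"
    unfolding scale_sum_coarse_def
    by (rule suminf_le[OF _ summable_coarse_terms]) (use coarse_term_bounds in auto)
  also have "(\<Sum>n. (1/2::real) ^ Suc n) = 1"
    using suminf_mult[of "\<lambda>n. (1/2::real) ^ n" "1/2"] by (simp add: suminf_geometric)
  finally show "scale_sum_coarse w K s \<le> 1" .
qed

lemma scale_sum_coarse_shift:
  "scale_sum_coarse w K (s + ln 5) = 2 * scale_sum_coarse w K s - level_cdf_lim w (exp s / K)"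
proof -
  have e: "exp (s + ln 5) = exp s * 5" by (simp add: exp_add)
  have "scale_sum_coarse w K s - (1/2) * level_cdf_lim w (exp s / K)
      = (\<Sum>n. (1/2) ^ Suc (Suc n) * level_cdf_lim w (exp s * 5 ^ Suc n / K))"
    using suminf_split_head[OF summable_coarse_terms[of s]] by (simp add: scale_sum_coarse_def)
  also have "\<dots> = (\<Sum>n. (1/2) * ((1/2) ^ Suc n * level_cdf_lim w (exp (s + ln 5) * 5 ^ n / K)))"
    by (simp add: e mult_ac)
  also have "\<dots> = (1/2) * scale_sum_coarse w K (s + ln 5)"
    unfolding scale_sum_coarse_def by (rule suminf_mult[OF summable_coarse_terms])
  finally show ?thesis by simp
qed

lemma continuous_scale_sum_fine: "continuous_on UNIV (scale_sum_fine w K)"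
proof (rule continuous_at_imp_continuous_on, intro ballI)
  fix s0 :: real
  have "continuous_on {..<s0 + 1}
      (\<lambda>s. \<Sum>n<scale_count K (exp (s0 + 1)). 2 ^ n * level_cdf_lim w (exp s / (K * 5 ^ Suc n)))"
    using K by (intro continuous_intros continuous_on_level_cdf_lim_comp) auto
  then have "continuous_on {..<s0 + 1} (scale_sum_fine w K)"
    by (rule continuous_on_cong[THEN iffD1, OF refl, rotated]) (simp add: scale_sum_fine_eq_sum[of _ "s0 + 1"])
  then show "isCont (scale_sum_fine w K) s0"
    by (simp add: continuous_on_eq_continuous_at)
qed

lemma continuous_scale_sum_coarse: "continuous_on UNIV (scale_sum_coarse w K)"
proof -
  let ?f = "\<lambda>n s. (1/2) ^ Suc n * level_cdf_lim w (exp s * 5 ^ n / K)"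
  have "uniform_limit UNIV (\<lambda>N s. \<Sum>n<N. ?f n s) (\<lambda>s. \<Sum>n. ?f n s) sequentially"
    by (rule Weierstrass_m_test[of UNIV ?f "\<lambda>n. (1/2) ^ Suc n"]) (use coarse_term_bounds in auto)
  moreover have "continuous_on UNIV (\<lambda>s. \<Sum>n<N. ?f n s)" for N
    using K by (intro continuous_intros continuous_on_level_cdf_lim_comp) auto
  ultimately show ?thesis
    unfolding scale_sum_coarse_def[abs_def]
    by (intro uniform_limit_theorem[OF always_eventually]) auto
qed

lemma rho_profile_periodic: "rho_profile w K (s + ln 5) = rho_profile w K s"
proof -
  have "- (ln 2 / ln 5) * (s + ln 5) = - (ln 2 / ln 5) * s - ln 2"
    by (simp add: field_simps)
  then have e: "exp (- (ln 2 / ln 5) * (s + ln 5)) = exp (- (ln 2 / ln 5) * s) / 2"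
    by (simp add: exp_diff)
  show ?thesis
    unfolding rho_profile_def e scale_sum_fine_shift scale_sum_coarse_shift by (simp add: algebra_simps)
qed

lemma continuous_rho_profile: "continuous_on UNIV (rho_profile w K)"
  unfolding rho_profile_def
  by (intro continuous_intros continuous_scale_sum_fine continuous_scale_sum_coarse)

end

lemma rho_minus_scale_sums:
  fixes m0 :: int and lam0 x :: real
  assumes "lam0 \<in> {2, 5, 6}" "0 < x"
  defines "w \<equiv> init_value lam0" and "K \<equiv> lambda_scale m0 lam0"
  shows "\<bar>real (rho m0 lam0 x) - (scale_sum_fine w K (ln x) + scale_sum_coarse w K (ln x))\<bar>
           \<le> 1 + 2 * real (scale_count K x)"
proof -
  have w: "0 \<le> w" "w \<le> 5" using init_value_bounds[OF assms(1)] by (auto simp: w_def)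
  have K: "0 < K" by (simp add: K_def lambda_scale_pos)
  define t where "t n = x / (K * 5 ^ Suc n)" for n
  define N where "N = scale_count K x"
  have term_bound: "\<bar>2 ^ n * (level_cdf w n (t n) - level_cdf_lim w (t n))\<bar> \<le> 2" for n
  proof -
    have "\<bar>2 ^ n * (level_cdf w n (t n) - level_cdf_lim w (t n))\<bar> \<le> 2 ^ n * (2 * (1/2) ^ n)"
      using level_cdf_lim_approx[OF w, of n "t n"] by (simp add: abs_mult)
    also have "\<dots> = 2" by (simp add: power_one_over)
    finally show ?thesis .
  qed
  have "\<bar>\<Sum>n<N. 2 ^ n * (level_cdf w n (t n) - level_cdf_lim w (t n))\<bar>
      \<le> (\<Sum>n<N. \<bar>2 ^ n * (level_cdf w n (t n) - level_cdf_lim w (t n))\<bar>)"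
    by (rule sum_abs)
  also have "\<dots> \<le> (\<Sum>n<N. 2)"
    by (rule sum_mono) (rule term_bound)
  finally have "\<bar>\<Sum>n<N. 2 ^ n * (level_cdf w n (t n) - level_cdf_lim w (t n))\<bar> \<le> 2 * real N"
    by simp
  moreover have "real (rho m0 lam0 x) = of_bool (lambda_e m0 lam0 [] \<le> x) + (\<Sum>n<N. 2 ^ n * level_cdf w n (t n))"
    using rho_eq_sum[OF assms(1,2)] by (simp add: w_def K_def N_def t_def)
  moreover have "scale_sum_fine w K (ln x) = (\<Sum>n<N. 2 ^ n * level_cdf_lim w (t n))"
    using scale_sum_fine_eq_sum[OF w K order_refl] assms(2) by (simp add: N_def t_def)
  moreover have "0 \<le> scale_sum_coarse w K (ln x) \<and> scale_sum_coarse w K (ln x) \<le> 1"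
    by (rule scale_sum_coarse_bounds[OF w K])
  ultimately show ?thesis
    unfolding N_def[symmetric] by (simp add: sum_subtractf algebra_simps abs_le_iff)
qed

lemma rho_profile_error:
  fixes m0 :: int and lam0 x :: real
  assumes "lam0 \<in> {2, 5, 6}" "lambda_scale m0 lam0 \<le> x"
  defines "w \<equiv> init_value lam0" and "K \<equiv> lambda_scale m0 lam0"
  shows "\<bar>real (rho m0 lam0 x) / x powr (ln 2 / ln 5) - rho_profile w K (ln x)\<bar>
           \<le> (3 - 2 * ln K / ln 5 + 2 / ln 5 * ln x) / x powr (ln 2 / ln 5)"
proof -
  have K: "0 < K" by (simp add: K_def lambda_scale_pos)
  then have "0 < x" using assms(2) K_def by linarith
  have "rho_profile w K (ln x) = (scale_sum_fine w K (ln x) + scale_sum_coarse w K (ln x)) / x powr (ln 2 / ln 5)"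
    using \<open>0 < x\<close> by (simp add: rho_profile_def powr_def exp_minus field_simps)
  then have "\<bar>real (rho m0 lam0 x) / x powr (ln 2 / ln 5) - rho_profile w K (ln x)\<bar>
      = \<bar>real (rho m0 lam0 x) - (scale_sum_fine w K (ln x) + scale_sum_coarse w K (ln x))\<bar> / x powr (ln 2 / ln 5)"
    by (simp add: diff_divide_distrib[symmetric] abs_divide)
  also have "\<dots> \<le> (1 + 2 * real (scale_count K x)) / x powr (ln 2 / ln 5)"
    using rho_minus_scale_sums[OF assms(1) \<open>0 < x\<close>] by (simp add: w_def K_def divide_right_mono)
  also have "\<dots> \<le> (3 - 2 * ln K / ln 5 + 2 / ln 5 * ln x) / x powr (ln 2 / ln 5)"
    using scale_count_le[OF K assms(2)[folded K_def]]
    by (intro divide_right_mono) (simp_all add: field_simps)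
  finally show ?thesis .
qed

lemma log_over_powr_tendsto_0: "((\<lambda>x::real. (a + b * ln x) / x powr (ln 2 / ln 5)) \<longlongrightarrow> 0) at_top"
  by real_asymp

theorem proposition5p3:
  fixes m0 :: int and lam0 :: real
  assumes "lam0 \<in> {2, 5, 6}"
  shows "\<exists>g :: real \<Rightarrow> real. continuous_on UNIV g \<and> (\<forall>t. g (t + ln 5) = g t) \<and>
           ((\<lambda>x. real (rho m0 lam0 x) / x powr (ln 2 / ln 5) - g (ln x)) \<longlongrightarrow> 0) at_top"
proof -
  define w K where "w = init_value lam0" and "K = lambda_scale m0 lam0"
  have w: "0 \<le> w" "w \<le> 5" using init_value_bounds[OF assms] by (auto simp: w_def)
  have K: "0 < K" by (simp add: K_def lambda_scale_pos)
  have "\<forall>\<^sub>F x in at_top. norm (real (rho m0 lam0 x) / x powr (ln 2 / ln 5) - rho_profile w K (ln x))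
          \<le> (3 - 2 * ln K / ln 5 + 2 / ln 5 * ln x) / x powr (ln 2 / ln 5)"
    using eventually_ge_at_top[of K]
    by eventually_elim (use rho_profile_error[OF assms] in \<open>simp add: w_def K_def\<close>)
  then have "((\<lambda>x. real (rho m0 lam0 x) / x powr (ln 2 / ln 5) - rho_profile w K (ln x)) \<longlongrightarrow> 0) at_top"
    by (rule Lim_null_comparison) (rule log_over_powr_tendsto_0)
  then show ?thesis
    using continuous_rho_profile[OF w K] rho_profile_periodic[OF w K] by blast
qed

end
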